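(* Fix $\omega_T>0$ and consider the multi-period mean-variance problem $$\max_{\text{admissible }u}\ \mathbb{E}(x_T)-\omega_T\mathrm{Var}(x_T)\quad\text{subject to } x_{t+1}=s_tx_t+P_t'u_t,\ t=0,\dots,T-1.$$ An optimal strategy is $$u_t^*=-s_tK_t\,x_t+K_t\Big[x_0\prod_{k=0}^{T-1}s_k+\frac{1}{2\omega_T\prod_{k=0}^{T-1}(1-B_k)}\Big]\prod_{k=t+1}^{T-1}s_k^{-1},\qquad t=0,\dots,T-1.$$ Under this strategy: $$\mathbb{E}(x_t)=x_0\prod_{k=0}^{t-1}s_k+\frac{1}{2\omega_T}\prod_{k=t}^{T-1}s_k^{-1}\cdot\frac{1-\prod_{k=0}^{t-1}(1-B_k)}{\prod_{k=0}^{T-1}(1-B_k)},\qquad t=0,\dots,T,$$ $$\mathrm{Var}(x_T)=\frac{1-\prod_{k=0}^{T-1}(1-B_k)}{4\omega_T^2\prod_{k=0}^{T-1}(1-B_k)}.$$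
   Context: Market model. Fix integers $T\ge1$ and $n\ge1$. For $t=0,\dots,T-1$ the following are given: - a deterministic riskless gross return $s_t>1$; - a random excess-return vector $P_t\in\mathbb{R}^n$. The vectors $P_0,\dots,P_{T-1}$ are independent and square integrable. Write $M_t=\mathbb{E}(P_tP_t')$ and $m_t=\mathbb{E}(P_t)$, and assume $M_t$ is positive definite. Set $$B_t=m_t'M_t^{-1}m_t,\qquad K_t=M_t^{-1}m_t,$$ and assume $0<B_t<1$ for all $t$. Wealth and strategies. The initial wealth $x_0\in\mathbb{R}$ is deterministic, and $x_{t+1}=s_tx_t+P_t'u_t$. A strategy $(u_0,\dots,u_{T-1})$ is admissible if each $u_t\in\mathbb{R}^n$ is square integrable and $\sigma(P_0,\dots,P_{t-1})$-measurable. Conventions: an empty product equals $1$. *)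

theory Defs
  imports "HOL-Probability.Probability"
begin

definition mom2 :: "'a measure \<Rightarrow> ('a \<Rightarrow> real^'n) \<Rightarrow> real^'n^'n" where
  "mom2 M X = (\<chi> i j. integral\<^sup>L M (\<lambda>w. X w $ i * X w $ j))"

definition mom1 :: "'a measure \<Rightarrow> ('a \<Rightarrow> real^'n) \<Rightarrow> real^'n" where
  "mom1 M X = (\<chi> i. integral\<^sup>L M (\<lambda>w. X w $ i))"

definition Kvec :: "'a measure \<Rightarrow> ('a \<Rightarrow> real^'n) \<Rightarrow> real^'n" where
  "Kvec M X = matrix_inv (mom2 M X) *v mom1 M X"

definition Bval :: "'a measure \<Rightarrow> ('a \<Rightarrow> real^'n) \<Rightarrow> real" where
  "Bval M X = mom1 M X \<bullet> Kvec M X"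

fun wealth :: "(nat \<Rightarrow> real) \<Rightarrow> (nat \<Rightarrow> 'a \<Rightarrow> real^'n) \<Rightarrow> (nat \<Rightarrow> 'a \<Rightarrow> real^'n)
    \<Rightarrow> real \<Rightarrow> nat \<Rightarrow> 'a \<Rightarrow> real" where
  "wealth s P u x0 0 w = x0"
| "wealth s P u x0 (Suc t) w = s t * wealth s P u x0 t w + P t w \<bullet> u t w"

fun fb_wealth :: "(nat \<Rightarrow> real) \<Rightarrow> (nat \<Rightarrow> 'a \<Rightarrow> real^'n) \<Rightarrow> (nat \<Rightarrow> real \<Rightarrow> real^'n)
    \<Rightarrow> real \<Rightarrow> nat \<Rightarrow> 'a \<Rightarrow> real" where
  "fb_wealth s P g x0 0 w = x0"
| "fb_wealth s P g x0 (Suc t) w = s t * fb_wealth s P g x0 t w + P t w \<bullet> g t (fb_wealth s P g x0 t w)"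

definition past_sigma :: "'a measure \<Rightarrow> (nat \<Rightarrow> 'a \<Rightarrow> real^'n) \<Rightarrow> nat \<Rightarrow> 'a measure" where
  "past_sigma M P t = sigma (space M) {P i -` A \<inter> space M | i A. i < t \<and> A \<in> sets borel}"

definition admissible :: "'a measure \<Rightarrow> (nat \<Rightarrow> 'a \<Rightarrow> real^'n) \<Rightarrow> nat \<Rightarrow> (nat \<Rightarrow> 'a \<Rightarrow> real^'n) \<Rightarrow> bool" where
  "admissible M P T u \<longleftrightarrow>
     (\<forall>t<T. u t \<in> borel_measurable (past_sigma M P t) \<and> integrable M (\<lambda>w. (norm (u t w))\<^sup>2))"

definition mv_feedback :: "'a measure \<Rightarrow> (nat \<Rightarrow> 'a \<Rightarrow> real^'n) \<Rightarrow> (nat \<Rightarrow> real) \<Rightarrow> nat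
    \<Rightarrow> real \<Rightarrow> real \<Rightarrow> nat \<Rightarrow> real \<Rightarrow> real^'n" where
  "mv_feedback M P s T x0 wT t x =
     (- s t * x) *\<^sub>R Kvec M (P t)
     + ((x0 * (\<Prod>k<T. s k) + 1 / (2 * wT * (\<Prod>k<T. 1 - Bval M (P k))))
          * (\<Prod>k\<in>{t+1..<T}. inverse (s k))) *\<^sub>R Kvec M (P t)"

end

theory Submission
  imports Defs
begin

text \<open>Embedding argument. Fix a terminal target \<open>\<gamma>\<close> and let \<open>\<gamma>\<^sub>t\<close> be \<open>\<gamma>\<close> discounted
  back to time \<open>t\<close> at the riskless rate. Since \<open>P\<^sub>t\<close> is independent of the past, one period
  turns \<open>E (x\<^sub>t - \<gamma>\<^sub>t)\<^sup>2\<close> into the expectation of a quadratic form in \<open>(x\<^sub>t - \<gamma>\<^sub>t, u\<^sub>t)\<close>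
  with matrix built from \<open>M\<^sub>t\<close> and \<open>m\<^sub>t\<close>; completing the square with \<open>K\<^sub>t = M\<^sub>t\<^sup>-\<^sup>1 m\<^sub>t\<close> shows
  that it is at least \<open>s\<^sub>t\<^sup>2 (1 - B\<^sub>t) E (x\<^sub>t - \<gamma>\<^sub>t)\<^sup>2\<close>, with equality for the feedback
  \<open>u\<^sub>t = -s\<^sub>t (x\<^sub>t - \<gamma>\<^sub>t) K\<^sub>t\<close>. Hence every admissible strategy has
  \<open>E (x\<^sub>T - \<gamma>)\<^sup>2 \<ge> \<Prod>\<^sub>k s\<^sub>k\<^sup>2 (1 - B\<^sub>k) (x\<^sub>0 - \<gamma>\<^sub>0)\<^sup>2\<close>. Optimising over \<open>\<gamma>\<close> turns this family of
  bounds into an upper bound for \<open>E x\<^sub>T - \<omega>\<^sub>T Var x\<^sub>T\<close>, and the feedback tracking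
  \<open>\<gamma> = x\<^sub>0 \<Prod>\<^sub>k s\<^sub>k + 1 / (2 \<omega>\<^sub>T \<Prod>\<^sub>k (1 - B\<^sub>k))\<close> attains it; its first two moments follow
  from the same one-period recursion.\<close>

lemma borel_measurable_vec_nth [measurable (raw)]:
  "f \<in> borel_measurable N \<Longrightarrow> (\<lambda>x. f x $ i :: real) \<in> borel_measurable N"
  using measurable_compose[OF _ borel_measurable_nth] by blast

lemma integrable_mult_of_square_integrable:
  fixes f g :: "'a \<Rightarrow> real"
  assumes "f \<in> borel_measurable M" "g \<in> borel_measurable M"
    and "integrable M (\<lambda>w. (f w)\<^sup>2)" "integrable M (\<lambda>w. (g w)\<^sup>2)"
  shows "integrable M (\<lambda>w. f w * g w)"
proof (rule Bochner_Integration.integrable_bound[of _ "\<lambda>w. (f w)\<^sup>2 + (g w)\<^sup>2"])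
  show "integrable M (\<lambda>w. (f w)\<^sup>2 + (g w)\<^sup>2)" using assms by simp
  show "(\<lambda>w. f w * g w) \<in> borel_measurable M" using assms by measurable
  have "\<bar>a * b\<bar> \<le> a\<^sup>2 + b\<^sup>2" for a b :: real
  proof -
    have "2 * \<bar>a\<bar> * \<bar>b\<bar> \<le> a\<^sup>2 + b\<^sup>2" using sum_squares_bound[of "\<bar>a\<bar>" "\<bar>b\<bar>"] by simp
    then show ?thesis
      using mult_nonneg_nonneg[OF abs_ge_zero abs_ge_zero, of a b] unfolding abs_mult by linarith
  qed
  then show "AE w in M. norm (f w * g w) \<le> norm ((f w)\<^sup>2 + (g w)\<^sup>2)"
    by (intro AE_I2) simp
qed

lemma square_integrable_vec_nth:
  fixes U :: "'a \<Rightarrow> real^'n"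
  assumes "U \<in> borel_measurable M" "integrable M (\<lambda>w. (norm (U w))\<^sup>2)"
  shows "integrable M (\<lambda>w. (U w $ i)\<^sup>2)"
proof (rule Bochner_Integration.integrable_bound[OF assms(2)])
  show "(\<lambda>w. (U w $ i)\<^sup>2) \<in> borel_measurable M" using assms(1) by measurable
  show "AE w in M. norm ((U w $ i)\<^sup>2) \<le> norm ((norm (U w))\<^sup>2)"
    by (intro AE_I2) (simp, metis abs_ge_zero power2_abs power_mono component_le_norm_cart)
qed

lemma inner_matrix_vector_symmetric:
  fixes A :: "real^'n^'n"
  assumes "transpose A = A"
  shows "x \<bullet> (A *v y) = y \<bullet> (A *v x)"
  by (metis assms dot_lmul_matrix inner_commute transpose_matrix_vector)

lemma transpose_mom2: "transpose (mom2 M X) = mom2 M X"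
  by (simp add: transpose_def mom2_def mult.commute)

lemma matrix_inv_right_if_pos_def:
  fixes A :: "real^'n^'n"
  assumes "\<And>x. x \<noteq> 0 \<Longrightarrow> x \<bullet> (A *v x) > 0"
  shows "A ** matrix_inv A = mat 1"
proof -
  have "\<forall>x. A *v x = 0 \<longrightarrow> x = 0" using assms by force
  then obtain B where "B ** A = mat 1" using matrix_left_invertible_ker by blast
  then have "A ** B = mat 1 \<and> B ** A = mat 1" using matrix_left_right_inverse by blast
  then have "A ** matrix_inv A = mat 1 \<and> matrix_inv A ** A = mat 1"
    unfolding matrix_inv_def by (rule someI)
  then show ?thesis ..
qed

lemma quadratic_form_complete_square:
  fixes A :: "real^'n^'n"
  assumes "transpose A = A" and "A *v k = m"
  shows "(v + a *\<^sub>R k) \<bullet> (A *v (v + a *\<^sub>R k))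
           = v \<bullet> (A *v v) + 2 * a * (v \<bullet> m) + a\<^sup>2 * (m \<bullet> k)"
  using inner_matrix_vector_symmetric[OF assms(1), of k v] assms(2)
  by (simp add: matrix_vector_right_distrib matrix_vector_mult_scaleR inner_add_left
      inner_add_right inner_commute power2_eq_square algebra_simps)

lemma (in finite_measure) square_integrable_diff_const:
  fixes f :: "'a \<Rightarrow> real"
  assumes "f \<in> borel_measurable M" "integrable M (\<lambda>w. (f w)\<^sup>2)"
  shows "integrable M (\<lambda>w. (f w - a)\<^sup>2)"
proof -
  have "integrable M f" using assms by (rule square_integrable_imp_integrable)
  then show ?thesis using assms(2) by (simp add: power2_diff)
qed

locale return_process = prob_space +
  fixes P :: "nat \<Rightarrow> 'a \<Rightarrow> real^'n" and T :: nat
  assumes P_measurable: "\<And>t. t < T \<Longrightarrow> P t \<in> borel_measurable M"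
    and P_indep: "indep_vars (\<lambda>_. borel) P {..<T}"
    and P_square_integrable: "\<And>t. t < T \<Longrightarrow> integrable M (\<lambda>w. (norm (P t w))\<^sup>2)"
begin

abbreviation past :: "nat \<Rightarrow> 'a measure" where
  "past t \<equiv> past_sigma M P t"

lemma space_past [simp]: "space (past t) = space M"
  unfolding past_sigma_def by (simp add: space_measure_of_conv)

lemma sets_past:
  "sets (past t) = sigma_sets (space M) {P i -` A \<inter> space M | i A. i < t \<and> A \<in> sets borel}"
  unfolding past_sigma_def by (rule sets_measure_of) auto

lemma sets_past_subset: "t \<le> T \<Longrightarrow> sets (past t) \<subseteq> sets M"
  unfolding sets_past using P_measurable
  by (intro sets.sigma_sets_subset) (auto intro!: measurable_sets)

lemma measurable_past_mono:
  "t \<le> t' \<Longrightarrow> f \<in> borel_measurable (past t) \<Longrightarrow> f \<in> borel_measurable (past t')"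
  by (rule measurable_from_subalg[of "past t'" "past t"])
     (fastforce simp: subalgebra_def sets_past intro!: sigma_sets_subseteq)

lemma measurable_past_imp_measurable:
  "t \<le> T \<Longrightarrow> f \<in> borel_measurable (past t) \<Longrightarrow> f \<in> borel_measurable M"
  using sets_past_subset by (intro measurable_from_subalg[of M "past t"]) (auto simp: subalgebra_def)

lemma measurable_past_P: "i < t \<Longrightarrow> P i \<in> borel_measurable (past t)"
  by (rule measurableI) (auto simp: sets_past intro: sigma_sets.Basic)

lemma indep_set_past_P:
  assumes "t < T"
  shows "indep_set (sets (past t)) (sigma_sets (space M) {P t -` A \<inter> space M | A. A \<in> sets borel})"
proof -
  define E where "E i = {P i -` A \<inter> space M | A. A \<in> sets (borel :: (real^'n) measure)}" for i
  define I where "I = case_bool {..<t} {t}"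
  have "indep_sets E (\<Union>b. I b)"
  proof (rule indep_sets_mono_index)
    show "indep_sets E {..<T}"
      using P_indep unfolding indep_vars_def E_def
      by (auto elim!: indep_sets_mono_sets)
    show "(\<Union>b. I b) \<subseteq> {..<T}" using assms by (auto simp: I_def split: bool.splits)
  qed
  moreover have "Int_stable (E i)" for i
    unfolding Int_stable_def E_def
  proof safe
    fix A B :: "(real^'n) set" assume "A \<in> sets borel" "B \<in> sets borel"
    then show "\<exists>C. (P i -` A \<inter> space M) \<inter> (P i -` B \<inter> space M) = P i -` C \<inter> space M \<and> C \<in> sets borel"
      by (intro exI[of _ "A \<inter> B"]) auto
  qed
  moreover have "disjoint_family_on I UNIV"
    unfolding disjoint_family_on_def I_def by (auto split: bool.split)
  ultimately have "indep_sets (\<lambda>b. sigma_sets (space M) (\<Union>i\<in>I b. E i)) UNIV"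
    by (rule indep_sets_collect_sigma)
  moreover have "(\<Union>i\<in>{..<t}. E i) = {P i -` A \<inter> space M | i A. i < t \<and> A \<in> sets borel}"
    unfolding E_def by auto
  ultimately show ?thesis
    unfolding indep_set_def sets_past by (simp add: I_def E_def case_bool_if if_distrib cong: if_cong)
qed

lemma integral_mult_indep_past:
  fixes Z :: "'a \<Rightarrow> real" and g :: "real^'n \<Rightarrow> real"
  assumes t: "t < T" and Z: "Z \<in> borel_measurable (past t)" "integrable M Z"
    and g: "g \<in> borel_measurable borel" "integrable M (\<lambda>w. g (P t w))"
  shows "integrable M (\<lambda>w. Z w * g (P t w))"
    and "(\<integral>w. Z w * g (P t w) \<partial>M) = (\<integral>w. Z w \<partial>M) * (\<integral>w. g (P t w) \<partial>M)"
proof -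
  have "{Z -` A \<inter> space M | A. A \<in> sets borel} \<subseteq> sets (past t)"
    using Z(1) by (auto dest: measurable_sets[where M="past t"])
  then have past_Z: "sigma_sets (space M) {Z -` A \<inter> space M | A. A \<in> sets borel} \<subseteq> sets (past t)"
    using sets.sigma_sets_subset[of _ "past t"] by simp
  have P_gP: "sigma_sets (space M) {(\<lambda>w. g (P t w)) -` A \<inter> space M | A. A \<in> sets borel}
      \<subseteq> sigma_sets (space M) {P t -` A \<inter> space M | A. A \<in> sets borel}"
  proof (rule sigma_sets_subseteq, safe)
    fix A :: "real set" assume "A \<in> sets borel"
    then have "g -` A \<in> sets borel" using g(1) by (metis measurable_sets space_borel Int_UNIV_right)
    then show "\<exists>B. (\<lambda>w. g (P t w)) -` A \<inter> space M = P t -` B \<inter> space M \<and> B \<in> sets borel"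
      by (intro exI[of _ "g -` A"]) auto
  qed
  have "indep_set (sigma_sets (space M) {Z -` A \<inter> space M | A. A \<in> sets borel})
      (sigma_sets (space M) {(\<lambda>w. g (P t w)) -` A \<inter> space M | A. A \<in> sets borel})"
    using indep_set_past_P[OF t] unfolding indep_set_def
    by (rule indep_sets_mono_sets) (use past_Z P_gP in \<open>auto split: bool.split\<close>)
  moreover have "Z \<in> borel_measurable M"
    using measurable_past_imp_measurable[OF less_imp_le[OF t] Z(1)] .
  moreover have "(\<lambda>w. g (P t w)) \<in> borel_measurable M" using g(1) P_measurable[OF t] by measurable
  ultimately have "indep_var borel Z borel (\<lambda>w. g (P t w))"
    unfolding indep_var_eq by simp
  then show "integrable M (\<lambda>w. Z w * g (P t w))"
    and "(\<integral>w. Z w * g (P t w) \<partial>M) = (\<integral>w. Z w \<partial>M) * (\<integral>w. g (P t w) \<partial>M)"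
    using Z(2) g(2) by (auto intro: indep_var_integrable indep_var_lebesgue_integral)
qed

lemma square_integrable_P_nth: "t < T \<Longrightarrow> integrable M (\<lambda>w. (P t w $ i)\<^sup>2)"
  by (rule square_integrable_vec_nth[OF P_measurable P_square_integrable])

lemma integral_mult_inner_P:
  fixes Z :: "'a \<Rightarrow> real"
  assumes t: "t < T" and Z: "Z \<in> borel_measurable (past t)" "integrable M (\<lambda>w. (Z w)\<^sup>2)"
    and U: "U \<in> borel_measurable (past t)" "integrable M (\<lambda>w. (norm (U w))\<^sup>2)"
  shows "integrable M (\<lambda>w. Z w * (P t w \<bullet> U w))"
    and "integrable M (\<lambda>w. Z w * (U w \<bullet> mom1 M (P t)))"
    and "(\<integral>w. Z w * (P t w \<bullet> U w) \<partial>M) = (\<integral>w. Z w * (U w \<bullet> mom1 M (P t)) \<partial>M)"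
proof -
  have ZU_past: "(\<lambda>w. Z w * U w $ i) \<in> borel_measurable (past t)" for i
    using Z(1) U(1) by measurable
  have ZM: "Z \<in> borel_measurable M" and UM: "U \<in> borel_measurable M"
    using measurable_past_imp_measurable[OF less_imp_le[OF t]] Z(1) U(1) by auto
  have ZU: "integrable M (\<lambda>w. Z w * U w $ i)" for i
    using ZM UM Z(2) square_integrable_vec_nth[OF UM U(2)]
    by (intro integrable_mult_of_square_integrable) (simp_all add: borel_measurable_vec_nth)
  have P_nth: "integrable M (\<lambda>w. P t w $ i)" for i
    using t P_measurable square_integrable_P_nth by (auto intro: square_integrable_imp_integrable)
  have ZUP: "integrable M (\<lambda>w. Z w * U w $ i * P t w $ i)"
    "(\<integral>w. Z w * U w $ i * P t w $ i \<partial>M) = (\<integral>w. Z w * U w $ i \<partial>M) * mom1 M (P t) $ i" for i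
    using integral_mult_indep_past[OF t ZU_past[of i] ZU[of i] borel_measurable_nth P_nth[of i]]
    by (simp_all add: mom1_def)
  have expand: "Z w * (P t w \<bullet> U w) = (\<Sum>i\<in>UNIV. Z w * U w $ i * P t w $ i)"
    "Z w * (U w \<bullet> mom1 M (P t)) = (\<Sum>i\<in>UNIV. Z w * U w $ i * mom1 M (P t) $ i)" for w
     by (simp add: inner_vec_def sum_distrib_left mult.commute mult.left_commute)
        (simp add: inner_vec_def sum_distrib_left mult.assoc)
  show "integrable M (\<lambda>w. Z w * (P t w \<bullet> U w))"
    and "integrable M (\<lambda>w. Z w * (U w \<bullet> mom1 M (P t)))"
    and "(\<integral>w. Z w * (P t w \<bullet> U w) \<partial>M) = (\<integral>w. Z w * (U w \<bullet> mom1 M (P t)) \<partial>M)"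
    unfolding expand using ZUP ZU by simp_all
qed

lemma integral_inner_P_square:
  assumes t: "t < T"
    and U: "U \<in> borel_measurable (past t)" "integrable M (\<lambda>w. (norm (U w))\<^sup>2)"
  shows "integrable M (\<lambda>w. (P t w \<bullet> U w)\<^sup>2)"
    and "integrable M (\<lambda>w. U w \<bullet> (mom2 M (P t) *v U w))"
    and "(\<integral>w. (P t w \<bullet> U w)\<^sup>2 \<partial>M) = (\<integral>w. U w \<bullet> (mom2 M (P t) *v U w) \<partial>M)"
proof -
  have UU_past: "(\<lambda>w. U w $ i * U w $ j) \<in> borel_measurable (past t)" for i j
    using U(1) by measurable
  have UM: "U \<in> borel_measurable M"
    using measurable_past_imp_measurable[OF less_imp_le[OF t] U(1)] .
  have UU: "integrable M (\<lambda>w. U w $ i * U w $ j)" for i j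
    using UM square_integrable_vec_nth[OF UM U(2)]
    by (intro integrable_mult_of_square_integrable) (simp_all add: borel_measurable_vec_nth)
  have PP: "integrable M (\<lambda>w. P t w $ i * P t w $ j)" for i j
    using t P_measurable square_integrable_P_nth by (intro integrable_mult_of_square_integrable) auto
  have g: "(\<lambda>p::real^'n. p $ i * p $ j) \<in> borel_measurable borel" for i j
    by measurable
  have UUPP: "integrable M (\<lambda>w. U w $ i * U w $ j * (P t w $ i * P t w $ j))"
    "(\<integral>w. U w $ i * U w $ j * (P t w $ i * P t w $ j) \<partial>M)
       = (\<integral>w. U w $ i * U w $ j \<partial>M) * mom2 M (P t) $ i $ j" for i j
    using integral_mult_indep_past[OF t UU_past[of i j] UU[of i j] g[of i j] PP[of i j]]
    by (simp_all add: mom2_def)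
  have expand: "(P t w \<bullet> U w)\<^sup>2 = (\<Sum>i\<in>UNIV. \<Sum>j\<in>UNIV. U w $ i * U w $ j * (P t w $ i * P t w $ j))"
    "U w \<bullet> (mom2 M (P t) *v U w) = (\<Sum>i\<in>UNIV. \<Sum>j\<in>UNIV. U w $ i * U w $ j * mom2 M (P t) $ i $ j)"
    for w
     by (simp add: inner_vec_def power2_eq_square sum_product mult.commute mult.left_commute)
        (simp add: inner_vec_def matrix_vector_mult_def sum_distrib_left mult.commute mult.left_commute)
  show "integrable M (\<lambda>w. (P t w \<bullet> U w)\<^sup>2)"
    and "integrable M (\<lambda>w. U w \<bullet> (mom2 M (P t) *v U w))"
    and "(\<integral>w. (P t w \<bullet> U w)\<^sup>2 \<partial>M) = (\<integral>w. U w \<bullet> (mom2 M (P t) *v U w) \<partial>M)"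
    unfolding expand using UUPP UU by simp_all
qed

lemma integral_one_period_square:
  fixes Y :: "'a \<Rightarrow> real" and c :: real
  assumes t: "t < T" and Y: "Y \<in> borel_measurable (past t)" "integrable M (\<lambda>w. (Y w)\<^sup>2)"
    and U: "U \<in> borel_measurable (past t)" "integrable M (\<lambda>w. (norm (U w))\<^sup>2)"
  shows "integrable M (\<lambda>w. (c * Y w + P t w \<bullet> U w)\<^sup>2)"
    and "integrable M (\<lambda>w. c\<^sup>2 * (Y w)\<^sup>2 + 2 * c * (Y w * (U w \<bullet> mom1 M (P t)))
                            + U w \<bullet> (mom2 M (P t) *v U w))"
    and "(\<integral>w. (c * Y w + P t w \<bullet> U w)\<^sup>2 \<partial>M)
           = (\<integral>w. c\<^sup>2 * (Y w)\<^sup>2 + 2 * c * (Y w * (U w \<bullet> mom1 M (P t)))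
                   + U w \<bullet> (mom2 M (P t) *v U w) \<partial>M)"
proof -
  note cross = integral_mult_inner_P[OF t Y U]
  note square = integral_inner_P_square[OF t U]
  have expand: "(c * Y w + P t w \<bullet> U w)\<^sup>2
      = c\<^sup>2 * (Y w)\<^sup>2 + 2 * c * (Y w * (P t w \<bullet> U w)) + (P t w \<bullet> U w)\<^sup>2" for w
    by (simp add: power2_sum power_mult_distrib mult_ac)
  have Y2: "integrable M (\<lambda>w. c\<^sup>2 * (Y w)\<^sup>2)" using Y(2) by simp
  have YP: "integrable M (\<lambda>w. 2 * c * (Y w * (P t w \<bullet> U w)))" using cross(1) by simp
  have Ym: "integrable M (\<lambda>w. 2 * c * (Y w * (U w \<bullet> mom1 M (P t))))" using cross(2) by simp
  show "integrable M (\<lambda>w. (c * Y w + P t w \<bullet> U w)\<^sup>2)"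
    unfolding expand using Y2 YP square(1) by (intro Bochner_Integration.integrable_add)
  show "integrable M (\<lambda>w. c\<^sup>2 * (Y w)\<^sup>2 + 2 * c * (Y w * (U w \<bullet> mom1 M (P t)))
                            + U w \<bullet> (mom2 M (P t) *v U w))"
    using Y2 Ym square(2) by (intro Bochner_Integration.integrable_add)
  have "(\<integral>w. (c * Y w + P t w \<bullet> U w)\<^sup>2 \<partial>M)
      = (\<integral>w. c\<^sup>2 * (Y w)\<^sup>2 \<partial>M) + (\<integral>w. 2 * c * (Y w * (P t w \<bullet> U w)) \<partial>M)
        + (\<integral>w. (P t w \<bullet> U w)\<^sup>2 \<partial>M)"
    unfolding expand using Y2 YP square(1)
    by (simp only: Bochner_Integration.integral_add Bochner_Integration.integrable_add)
  also have "\<dots> = (\<integral>w. c\<^sup>2 * (Y w)\<^sup>2 \<partial>M) + (\<integral>w. 2 * c * (Y w * (U w \<bullet> mom1 M (P t))) \<partial>M)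
        + (\<integral>w. U w \<bullet> (mom2 M (P t) *v U w) \<partial>M)"
    by (simp only: integral_mult_right_zero cross(3) square(3))
  also have "\<dots> = (\<integral>w. c\<^sup>2 * (Y w)\<^sup>2 + 2 * c * (Y w * (U w \<bullet> mom1 M (P t)))
                   + U w \<bullet> (mom2 M (P t) *v U w) \<partial>M)"
    using Y2 Ym square(2)
    by (simp only: Bochner_Integration.integral_add Bochner_Integration.integrable_add)
  finally show "(\<integral>w. (c * Y w + P t w \<bullet> U w)\<^sup>2 \<partial>M)
           = (\<integral>w. c\<^sup>2 * (Y w)\<^sup>2 + 2 * c * (Y w * (U w \<bullet> mom1 M (P t)))
                   + U w \<bullet> (mom2 M (P t) *v U w) \<partial>M)" .
qed

lemma integral_one_period:
  fixes Y :: "'a \<Rightarrow> real" and c :: real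
  assumes t: "t < T" and Y: "Y \<in> borel_measurable (past t)" "integrable M (\<lambda>w. (Y w)\<^sup>2)"
    and U: "U \<in> borel_measurable (past t)" "integrable M (\<lambda>w. (norm (U w))\<^sup>2)"
  shows "(\<integral>w. c * Y w + P t w \<bullet> U w \<partial>M) = c * (\<integral>w. Y w \<partial>M) + (\<integral>w. U w \<bullet> mom1 M (P t) \<partial>M)"
proof -
  have "integrable M Y"
    using measurable_past_imp_measurable[OF less_imp_le[OF t] Y(1)] Y(2)
    by (rule square_integrable_imp_integrable)
  moreover note integral_mult_inner_P[OF t _ _ U, of "\<lambda>_. 1"]
  ultimately show ?thesis by simp
qed

lemma wealth_measurable_square_integrable:
  assumes "t \<le> T" and "admissible M P t u"
  shows "wealth s P u x0 t \<in> borel_measurable (past t)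
      \<and> integrable M (\<lambda>w. (wealth s P u x0 t w)\<^sup>2)"
  using assms
proof (induction t)
  case 0
  then show ?case by simp
next
  case (Suc t)
  then have t: "t < T" and u: "u t \<in> borel_measurable (past t)" "integrable M (\<lambda>w. (norm (u t w))\<^sup>2)"
    by (auto simp: admissible_def)
  have IH: "wealth s P u x0 t \<in> borel_measurable (past t)" "integrable M (\<lambda>w. (wealth s P u x0 t w)\<^sup>2)"
    using Suc by (auto simp: admissible_def)
  have "wealth s P u x0 t \<in> borel_measurable (past (Suc t))" "u t \<in> borel_measurable (past (Suc t))"
    using measurable_past_mono[of t "Suc t"] IH(1) u(1) by auto
  then have "(\<lambda>w. s t * wealth s P u x0 t w + P t w \<bullet> u t w) \<in> borel_measurable (past (Suc t))"
    using measurable_past_P[of t "Suc t"] by measurable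
  moreover have "integrable M (\<lambda>w. (s t * wealth s P u x0 t w + P t w \<bullet> u t w)\<^sup>2)"
    using integral_one_period_square(1)[OF t IH u] .
  ultimately show ?case by simp
qed

lemma wealth_diff_measurable_square_integrable:
  assumes "t \<le> T" and "admissible M P t u"
  shows "(\<lambda>w. wealth s P u x0 t w - c) \<in> borel_measurable (past t)"
    and "integrable M (\<lambda>w. (wealth s P u x0 t w - c)\<^sup>2)"
  using wealth_measurable_square_integrable[OF assms, of s x0]
    measurable_past_imp_measurable[OF assms(1)]
  by (auto intro: square_integrable_diff_const)

end

lemma admissible_mono: "admissible M P T u \<Longrightarrow> t \<le> T \<Longrightarrow> admissible M P t u"
  by (auto simp: admissible_def)

locale mv_market = return_process +
  fixes s :: "nat \<Rightarrow> real"
  assumes s_gt_1: "\<And>t. t < T \<Longrightarrow> s t > 1"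
    and mom2_pos_def: "\<And>t x. t < T \<Longrightarrow> x \<noteq> 0 \<Longrightarrow> x \<bullet> (mom2 M (P t) *v x) > 0"
    and Bval_bounds: "\<And>t. t < T \<Longrightarrow> 0 < Bval M (P t) \<and> Bval M (P t) < 1"
begin

lemma mom2_nonneg: "t < T \<Longrightarrow> 0 \<le> x \<bullet> (mom2 M (P t) *v x)"
  using mom2_pos_def[of t x] by (cases "x = 0") auto

lemma mom2_complete_square:
  assumes "t < T"
  shows "(v + a *\<^sub>R Kvec M (P t)) \<bullet> (mom2 M (P t) *v (v + a *\<^sub>R Kvec M (P t)))
       = v \<bullet> (mom2 M (P t) *v v) + 2 * a * (v \<bullet> mom1 M (P t)) + a\<^sup>2 * Bval M (P t)"
proof -
  have "mom2 M (P t) *v Kvec M (P t) = mom1 M (P t)"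
    using matrix_inv_right_if_pos_def[OF mom2_pos_def[OF assms]]
    by (simp add: Kvec_def matrix_vector_mul_assoc)
  then show ?thesis
    unfolding Bval_def by (rule quadratic_form_complete_square[OF transpose_mom2])
qed

text \<open>Completing the square with the pointwise choice \<open>U = -(c Y) K\<close> shows that no
  portfolio can reduce the second moment by more than the factor \<open>1 - B\<close>, and that this
  choice attains it.\<close>

lemma integral_one_period_square_ge:
  fixes Y :: "'a \<Rightarrow> real" and c :: real
  assumes t: "t < T" and Y: "Y \<in> borel_measurable (past t)" "integrable M (\<lambda>w. (Y w)\<^sup>2)"
    and U: "U \<in> borel_measurable (past t)" "integrable M (\<lambda>w. (norm (U w))\<^sup>2)"
  shows "c\<^sup>2 * (1 - Bval M (P t)) * (\<integral>w. (Y w)\<^sup>2 \<partial>M) \<le> (\<integral>w. (c * Y w + P t w \<bullet> U w)\<^sup>2 \<partial>M)"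
proof -
  note moments = integral_one_period_square[OF t Y U, of c]
  have "(\<integral>w. c\<^sup>2 * (1 - Bval M (P t)) * (Y w)\<^sup>2 \<partial>M)
      \<le> (\<integral>w. c\<^sup>2 * (Y w)\<^sup>2 + 2 * c * (Y w * (U w \<bullet> mom1 M (P t)))
             + U w \<bullet> (mom2 M (P t) *v U w) \<partial>M)"
  proof (rule integral_mono)
    fix w
    have "0 \<le> (U w + (c * Y w) *\<^sub>R Kvec M (P t)) \<bullet> (mom2 M (P t) *v (U w + (c * Y w) *\<^sub>R Kvec M (P t)))"
      by (rule mom2_nonneg[OF t])
    then show "c\<^sup>2 * (1 - Bval M (P t)) * (Y w)\<^sup>2
        \<le> c\<^sup>2 * (Y w)\<^sup>2 + 2 * c * (Y w * (U w \<bullet> mom1 M (P t))) + U w \<bullet> (mom2 M (P t) *v U w)"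
      unfolding mom2_complete_square[OF t] by (simp add: power_mult_distrib algebra_simps)
  qed (use Y(2) moments(2) in simp_all)
  then show ?thesis using moments(3) by simp
qed

lemma integral_one_period_feedback:
  fixes Y :: "'a \<Rightarrow> real" and c :: real
  assumes t: "t < T" and Y: "Y \<in> borel_measurable (past t)" "integrable M (\<lambda>w. (Y w)\<^sup>2)"
  defines "U \<equiv> \<lambda>w. (- (c * Y w)) *\<^sub>R Kvec M (P t)"
  shows "(\<integral>w. (c * Y w + P t w \<bullet> U w)\<^sup>2 \<partial>M) = c\<^sup>2 * (1 - Bval M (P t)) * (\<integral>w. (Y w)\<^sup>2 \<partial>M)"
    and "(\<integral>w. c * Y w + P t w \<bullet> U w \<partial>M) = c * (1 - Bval M (P t)) * (\<integral>w. Y w \<partial>M)"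
proof -
  have U_past: "U \<in> borel_measurable (past t)" unfolding U_def using Y(1) by measurable
  have "(\<lambda>w. (norm (U w))\<^sup>2) = (\<lambda>w. (c\<^sup>2 * (norm (Kvec M (P t)))\<^sup>2) * (Y w)\<^sup>2)"
    unfolding U_def by (simp add: power_mult_distrib mult_ac)
  then have U2: "integrable M (\<lambda>w. (norm (U w))\<^sup>2)" using Y(2) by simp
  have "U w \<bullet> (mom2 M (P t) *v U w) + 2 * (c * Y w) * (U w \<bullet> mom1 M (P t))
      + (c * Y w)\<^sup>2 * Bval M (P t) = 0" for w
    using mom2_complete_square[OF t, of "U w" "c * Y w", symmetric] by (simp add: U_def)
  then have "c\<^sup>2 * (Y w)\<^sup>2 + 2 * c * (Y w * (U w \<bullet> mom1 M (P t))) + U w \<bullet> (mom2 M (P t) *v U w)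
      = c\<^sup>2 * (1 - Bval M (P t)) * (Y w)\<^sup>2" for w
    by (simp add: power_mult_distrib algebra_simps)
  then show "(\<integral>w. (c * Y w + P t w \<bullet> U w)\<^sup>2 \<partial>M) = c\<^sup>2 * (1 - Bval M (P t)) * (\<integral>w. (Y w)\<^sup>2 \<partial>M)"
    using integral_one_period_square(3)[OF t Y U_past U2, of c] by simp
  have "U w \<bullet> mom1 M (P t) = - c * Bval M (P t) * Y w" for w
    by (simp add: U_def Bval_def inner_commute)
  then show "(\<integral>w. c * Y w + P t w \<bullet> U w \<partial>M) = c * (1 - Bval M (P t)) * (\<integral>w. Y w \<partial>M)"
    using integral_one_period[OF t Y U_past U2, of c] by (simp add: algebra_simps)
qed

lemma prod_s_pos: "t \<le> T \<Longrightarrow> 0 < (\<Prod>k<t. s k)"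
  using s_gt_1 by (intro prod_pos) (meson lessThan_iff less_le_trans zero_less_one less_trans)

lemma prod_one_minus_Bval_pos: "t \<le> T \<Longrightarrow> 0 < (\<Prod>k<t. 1 - Bval M (P k))"
  using Bval_bounds by (intro prod_pos) (meson lessThan_iff less_le_trans diff_gt_0_iff_gt)

definition growth_factor :: real where
  "growth_factor = (\<Prod>k<T. s k)"

definition residual_factor :: real where
  "residual_factor = (\<Prod>k<T. 1 - Bval M (P k))"

lemma growth_factor_pos: "0 < growth_factor"
  unfolding growth_factor_def by (rule prod_s_pos) simp

lemma residual_factor_pos: "0 < residual_factor"
  unfolding residual_factor_def by (rule prod_one_minus_Bval_pos) simp

lemma residual_factor_less_1:
  assumes "1 \<le> T" shows "residual_factor < 1"
proof -
  obtain n where n: "T = Suc n" using assms by (cases T) auto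
  have "(\<Prod>k<n. 1 - Bval M (P k)) \<le> 1"
  proof (rule prod_le_1)
    fix k assume "k \<in> {..<n}"
    then show "0 \<le> 1 - Bval M (P k) \<and> 1 - Bval M (P k) \<le> 1" using Bval_bounds[of k] n by simp
  qed
  then have "(\<Prod>k<n. 1 - Bval M (P k)) * (1 - Bval M (P n)) \<le> 1 - Bval M (P n)"
    using prod_one_minus_Bval_pos[of n] Bval_bounds[of n] n by (intro mult_left_le_one_le) auto
  moreover have "residual_factor = (\<Prod>k<n. 1 - Bval M (P k)) * (1 - Bval M (P n))"
    unfolding residual_factor_def by (simp add: n)
  moreover have "0 < Bval M (P n)" using Bval_bounds[of n] n by simp
  ultimately show ?thesis by linarith
qed

lemma prod_inverse_s_tail:
  assumes "t \<le> T"
  shows "(\<Prod>k\<in>{t..<T}. inverse (s k)) = (\<Prod>k<t. s k) / growth_factor"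
proof -
  have "growth_factor = (\<Prod>k<t. s k) * (\<Prod>k\<in>{t..<T}. s k)"
    using prod.atLeastLessThan_concat[of 0 t T s] assms
    by (simp add: growth_factor_def lessThan_atLeast0)
  moreover have "(\<Prod>k<t. s k) \<noteq> 0" using prod_s_pos[OF assms] by linarith
  moreover have "(\<Prod>k\<in>{t..<T}. inverse (s k)) = inverse (\<Prod>k\<in>{t..<T}. s k)"
    using prod_inversef[of s "{t..<T}"] by (simp add: o_def)
  ultimately show ?thesis by (simp add: nonzero_divide_mult_cancel_left inverse_eq_divide)
qed

definition target :: "real \<Rightarrow> nat \<Rightarrow> real" where
  "target \<gamma> t = \<gamma> * (\<Prod>k<t. s k) / growth_factor"

lemma target_Suc: "target \<gamma> (Suc t) = s t * target \<gamma> t"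
  by (simp add: target_def)

lemma target_0: "target \<gamma> 0 = \<gamma> / growth_factor"
  by (simp add: target_def)

lemma target_T: "target \<gamma> T = \<gamma>"
  using growth_factor_pos by (simp add: target_def growth_factor_def[symmetric])

lemma tracking_error_ge:
  assumes "t \<le> T" and u: "admissible M P T u"
  shows "(\<Prod>k<t. (s k)\<^sup>2 * (1 - Bval M (P k))) * (x0 - target \<gamma> 0)\<^sup>2
     \<le> (\<integral>w. (wealth s P u x0 t w - target \<gamma> t)\<^sup>2 \<partial>M)"
  using assms(1)
proof (induction t)
  case 0
  then show ?case by (simp add: prob_space)
next
  case (Suc t)
  then have t: "t < T" by simp
  note Y = wealth_diff_measurable_square_integrable[OF less_imp_le[OF t]
      admissible_mono[OF u less_imp_le[OF t]], of s x0 "target \<gamma> t"]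
  have "u t \<in> borel_measurable (past t)" "integrable M (\<lambda>w. (norm (u t w))\<^sup>2)"
    using u t by (auto simp: admissible_def)
  note step = integral_one_period_square_ge[OF t Y this, of "s t"]
  have "(\<lambda>w. (wealth s P u x0 (Suc t) w - target \<gamma> (Suc t))\<^sup>2)
      = (\<lambda>w. (s t * (wealth s P u x0 t w - target \<gamma> t) + P t w \<bullet> u t w)\<^sup>2)"
    by (simp add: target_Suc algebra_simps)
  then have "(s t)\<^sup>2 * (1 - Bval M (P t)) * (\<integral>w. (wealth s P u x0 t w - target \<gamma> t)\<^sup>2 \<partial>M)
      \<le> (\<integral>w. (wealth s P u x0 (Suc t) w - target \<gamma> (Suc t))\<^sup>2 \<partial>M)"
    using step by (simp only:)
  moreover have "(s t)\<^sup>2 * (1 - Bval M (P t)) * ((\<Prod>k<t. (s k)\<^sup>2 * (1 - Bval M (P k))) * (x0 - target \<gamma> 0)\<^sup>2)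
      \<le> (s t)\<^sup>2 * (1 - Bval M (P t)) * (\<integral>w. (wealth s P u x0 t w - target \<gamma> t)\<^sup>2 \<partial>M)"
    using Suc.IH t Bval_bounds[OF t] by (intro mult_left_mono) auto
  ultimately show ?case by (simp add: mult_ac)
qed

end

lemma wealth_feedback:
  "wealth s P (\<lambda>t w. g t (fb_wealth s P g x0 t w)) x0 t = fb_wealth s P g x0 t"
  by (induction t) auto

lemma (in prob_space) variance_diff_const:
  fixes X :: "'a \<Rightarrow> real"
  assumes "integrable M X"
  shows "variance (\<lambda>w. X w - c) = variance X"
  using assms by (simp add: prob_space)

lemma diff_le_quadratic_bound:
  fixes d k :: real
  assumes "0 < k"
  shows "d - k * d\<^sup>2 \<le> 1 / (4 * k)"
proof -
  have "0 \<le> (2 * k * d - 1)\<^sup>2 / (4 * k)" using assms by simp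
  also have "\<dots> = 1 / (4 * k) - (d - k * d\<^sup>2)"
    using assms by (simp add: field_simps power2_eq_square)
  finally show ?thesis by simp
qed

lemma mean_variance_le_of_tracking_bound:
  fixes e m2 a z w :: real
  assumes z: "0 < z" "z < 1" and w: "0 < w"
    and tracking: "\<And>\<gamma>. z * (a - \<gamma>)\<^sup>2 \<le> m2 - 2 * \<gamma> * e + \<gamma>\<^sup>2"
  shows "e - w * (m2 - e\<^sup>2) \<le> a + (1 - z) / (4 * w * z)"
proof -
  \<comment> \<open>the tracking bound is used at the \<open>\<gamma>\<close> where it is tightest\<close>
  define \<gamma> where "\<gamma> = (e - z * a) / (1 - z)"
  define k where "k = w * z / (1 - z)"
  have "e = \<gamma> * (1 - z) + z * a" using z by (simp add: \<gamma>_def field_simps)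
  then have "(z * (a - \<gamma>)\<^sup>2 + 2 * \<gamma> * e - \<gamma>\<^sup>2 - e\<^sup>2) * (1 - z) = z * (e - a)\<^sup>2"
    by algebra
  moreover have "(z * (a - \<gamma>)\<^sup>2 + 2 * \<gamma> * e - \<gamma>\<^sup>2 - e\<^sup>2) * (1 - z) \<le> (m2 - e\<^sup>2) * (1 - z)"
    using tracking[of \<gamma>] z by (intro mult_right_mono) auto
  ultimately have "z * (e - a)\<^sup>2 \<le> (m2 - e\<^sup>2) * (1 - z)" by simp
  have "k * (e - a)\<^sup>2 = w * (z * (e - a)\<^sup>2) / (1 - z)" by (simp add: k_def)
  also have "\<dots> \<le> w * ((m2 - e\<^sup>2) * (1 - z)) / (1 - z)"
    using \<open>z * (e - a)\<^sup>2 \<le> (m2 - e\<^sup>2) * (1 - z)\<close> z w by (intro divide_right_mono mult_left_mono) auto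
  also have "\<dots> = w * (m2 - e\<^sup>2)" using z by simp
  finally have "k * (e - a)\<^sup>2 \<le> w * (m2 - e\<^sup>2)" .
  moreover have "(e - a) - k * (e - a)\<^sup>2 \<le> 1 / (4 * k)"
    using z w by (intro diff_le_quadratic_bound) (simp add: k_def)
  moreover have "1 / (4 * k) = (1 - z) / (4 * w * z)" by (simp add: k_def)
  ultimately show ?thesis by linarith
qed

locale mv_problem = mv_market +
  fixes x0 wT :: real
  assumes wT_pos: "wT > 0"
begin

definition optimal_target :: real where
  "optimal_target = x0 * growth_factor + 1 / (2 * wT * residual_factor)"

definition optimal_strategy where
  "optimal_strategy t w =
     mv_feedback M P s T x0 wT t (fb_wealth s P (mv_feedback M P s T x0 wT) x0 t w)"

lemma mv_feedback_eq_tracking: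
  assumes "t < T"
  shows "mv_feedback M P s T x0 wT t x = (- (s t * (x - target optimal_target t))) *\<^sub>R Kvec M (P t)"
proof -
  have "s t * target optimal_target t = optimal_target * (\<Prod>k\<in>{t+1..<T}. inverse (s k))"
    using prod_inverse_s_tail[of "Suc t"] assms by (simp add: target_Suc[symmetric] target_def)
  then have "- s t * x + optimal_target * (\<Prod>k\<in>{t+1..<T}. inverse (s k))
      = - (s t * (x - target optimal_target t))"
    by (simp add: right_diff_distrib)
  then show ?thesis
    unfolding mv_feedback_def growth_factor_def[symmetric] residual_factor_def[symmetric]
      optimal_target_def[symmetric] scaleR_left_distrib[symmetric] by simp
qed

lemma optimal_strategy_eq_tracking:
  assumes "t < T"
  shows "optimal_strategy t w
    = (- (s t * (wealth s P optimal_strategy x0 t w - target optimal_target t))) *\<^sub>R Kvec M (P t)"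
proof -
  have "optimal_strategy
      = (\<lambda>t w. mv_feedback M P s T x0 wT t (fb_wealth s P (mv_feedback M P s T x0 wT) x0 t w))"
    by (simp add: fun_eq_iff optimal_strategy_def)
  then have "wealth s P optimal_strategy x0 t w = fb_wealth s P (mv_feedback M P s T x0 wT) x0 t w"
    by (simp only: wealth_feedback)
  then show ?thesis by (simp add: optimal_strategy_def mv_feedback_eq_tracking[OF assms])
qed

lemma admissible_optimal_strategy: "t \<le> T \<Longrightarrow> admissible M P t optimal_strategy"
proof (induction t)
  case 0
  then show ?case by (simp add: admissible_def)
next
  case (Suc t)
  then have t: "t < T" and adm: "admissible M P t optimal_strategy" by simp_all
  note Y = wealth_diff_measurable_square_integrable[OF less_imp_le[OF t] adm,
      of s x0 "target optimal_target t"]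
  have u: "optimal_strategy t = (\<lambda>w. (- (s t * (wealth s P optimal_strategy x0 t w - target optimal_target t)))
      *\<^sub>R Kvec M (P t))"
    using optimal_strategy_eq_tracking[OF t] by (simp add: fun_eq_iff)
  have "optimal_strategy t \<in> borel_measurable (past t)" unfolding u using Y(1) by measurable
  moreover have "(\<lambda>w. (norm (optimal_strategy t w))\<^sup>2) = (\<lambda>w. ((s t)\<^sup>2 * (norm (Kvec M (P t)))\<^sup>2)
      * (wealth s P optimal_strategy x0 t w - target optimal_target t)\<^sup>2)"
    unfolding u by (simp add: power_mult_distrib mult_ac)
  then have "integrable M (\<lambda>w. (norm (optimal_strategy t w))\<^sup>2)" using Y(2) by simp
  ultimately show ?case using adm by (auto simp: admissible_def less_Suc_eq)
qed

lemma optimal_strategy_tracking_moments: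
  assumes "t \<le> T"
  shows "(\<integral>w. wealth s P optimal_strategy x0 t w - target optimal_target t \<partial>M)
           = (\<Prod>k<t. s k * (1 - Bval M (P k))) * (x0 - target optimal_target 0)"
    and "(\<integral>w. (wealth s P optimal_strategy x0 t w - target optimal_target t)\<^sup>2 \<partial>M)
           = (\<Prod>k<t. (s k)\<^sup>2 * (1 - Bval M (P k))) * (x0 - target optimal_target 0)\<^sup>2"
proof -
  have "(\<integral>w. wealth s P optimal_strategy x0 t w - target optimal_target t \<partial>M)
           = (\<Prod>k<t. s k * (1 - Bval M (P k))) * (x0 - target optimal_target 0)
      \<and> (\<integral>w. (wealth s P optimal_strategy x0 t w - target optimal_target t)\<^sup>2 \<partial>M)
           = (\<Prod>k<t. (s k)\<^sup>2 * (1 - Bval M (P k))) * (x0 - target optimal_target 0)\<^sup>2"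
    using assms
  proof (induction t)
    case 0
    then show ?case by (simp add: prob_space)
  next
    case (Suc t)
    then have t: "t < T" by simp
    define Y where "Y w = wealth s P optimal_strategy x0 t w - target optimal_target t" for w
    have Y_past: "Y \<in> borel_measurable (past t)" "integrable M (\<lambda>w. (Y w)\<^sup>2)"
      unfolding Y_def
      using wealth_diff_measurable_square_integrable[OF less_imp_le[OF t] admissible_optimal_strategy] t by auto
    have step: "wealth s P optimal_strategy x0 (Suc t) w - target optimal_target (Suc t)
        = s t * Y w + P t w \<bullet> ((- (s t * Y w)) *\<^sub>R Kvec M (P t))" for w
      unfolding wealth.simps(2) optimal_strategy_eq_tracking[OF t] Y_def target_Suc by (simp add: algebra_simps)
    note feedback = integral_one_period_feedback[OF t Y_past, of "s t"]
    have IH: "(\<integral>w. Y w \<partial>M) = (\<Prod>k<t. s k * (1 - Bval M (P k))) * (x0 - target optimal_target 0)"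
      "(\<integral>w. (Y w)\<^sup>2 \<partial>M) = (\<Prod>k<t. (s k)\<^sup>2 * (1 - Bval M (P k))) * (x0 - target optimal_target 0)\<^sup>2"
      using Suc.IH t unfolding Y_def by auto
    show ?case
      unfolding step feedback IH by (simp add: mult_ac)
  qed
  then show "(\<integral>w. wealth s P optimal_strategy x0 t w - target optimal_target t \<partial>M)
           = (\<Prod>k<t. s k * (1 - Bval M (P k))) * (x0 - target optimal_target 0)"
    and "(\<integral>w. (wealth s P optimal_strategy x0 t w - target optimal_target t)\<^sup>2 \<partial>M)
           = (\<Prod>k<t. (s k)\<^sup>2 * (1 - Bval M (P k))) * (x0 - target optimal_target 0)\<^sup>2"
    by auto
qed

lemma x0_minus_target_0:
  "x0 - target optimal_target 0 = - 1 / (2 * wT * residual_factor * growth_factor)"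
  using growth_factor_pos residual_factor_pos wT_pos
  by (simp add: target_0 optimal_target_def field_simps)

lemma integrable_wealth_optimal_strategy:
  "t \<le> T \<Longrightarrow> integrable M (wealth s P optimal_strategy x0 t)"
  using wealth_measurable_square_integrable[OF _ admissible_optimal_strategy]
    measurable_past_imp_measurable square_integrable_imp_integrable by blast

lemma expectation_wealth_optimal_strategy:
  assumes "t \<le> T"
  shows "expectation (wealth s P optimal_strategy x0 t)
    = x0 * (\<Prod>k<t. s k) + 1 / (2 * wT) * (\<Prod>k\<in>{t..<T}. inverse (s k))
        * (1 - (\<Prod>k<t. 1 - Bval M (P k))) / residual_factor"
proof -
  define St where "St = (\<Prod>k<t. s k)"
  define Rt where "Rt = (\<Prod>k<t. 1 - Bval M (P k))"
  have "expectation (wealth s P optimal_strategy x0 t)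
      = (\<integral>w. wealth s P optimal_strategy x0 t w - target optimal_target t \<partial>M)
        + target optimal_target t"
    using integrable_wealth_optimal_strategy[OF assms] by (simp add: prob_space)
  also have "\<dots> = St * Rt * (- 1 / (2 * wT * residual_factor * growth_factor))
      + optimal_target * St / growth_factor"
    by (simp only: optimal_strategy_tracking_moments(1)[OF assms] x0_minus_target_0 prod.distrib)
       (simp add: target_def St_def Rt_def)
  also have "\<dots> = x0 * St + 1 / (2 * wT) * (St / growth_factor) * (1 - Rt) / residual_factor"
    using growth_factor_pos residual_factor_pos wT_pos
    by (simp add: optimal_target_def field_simps)
  finally show ?thesis
    unfolding prod_inverse_s_tail[OF assms] St_def Rt_def .
qed

lemma variance_wealth_optimal_strategy:
  "variance (wealth s P optimal_strategy x0 T)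
     = (1 - residual_factor) / (4 * wT\<^sup>2 * residual_factor)"
proof -
  define Y where "Y w = wealth s P optimal_strategy x0 T w - optimal_target" for w
  note Y_past = wealth_diff_measurable_square_integrable[OF order_refl
      admissible_optimal_strategy[OF order_refl], of s x0 optimal_target, folded Y_def]
  have "integrable M Y"
    using measurable_past_imp_measurable[OF order_refl Y_past(1)] Y_past(2)
    by (rule square_integrable_imp_integrable)
  have "variance (wealth s P optimal_strategy x0 T) = variance Y"
    unfolding Y_def
    by (rule variance_diff_const[symmetric, OF integrable_wealth_optimal_strategy[OF order_refl]])
  also have "\<dots> = expectation (\<lambda>w. (Y w)\<^sup>2) - (expectation Y)\<^sup>2"
    using \<open>integrable M Y\<close> Y_past(2) by (rule variance_eq)
  also have "\<dots> = growth_factor\<^sup>2 * residual_factor * (- 1 / (2 * wT * residual_factor * growth_factor))\<^sup>2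
      - (growth_factor * residual_factor * (- 1 / (2 * wT * residual_factor * growth_factor)))\<^sup>2"
    using optimal_strategy_tracking_moments[OF order_refl]
    unfolding Y_def target_T x0_minus_target_0 prod.distrib prod_power_distrib[symmetric]
      growth_factor_def[symmetric] residual_factor_def[symmetric]
    by simp
  also have "\<dots> = (1 - residual_factor) / (4 * wT\<^sup>2 * residual_factor)"
    using growth_factor_pos residual_factor_pos wT_pos by (simp add: field_simps power2_eq_square)
  finally show ?thesis .
qed

lemma mean_variance_optimal_strategy:
  "expectation (wealth s P optimal_strategy x0 T) - wT * variance (wealth s P optimal_strategy x0 T)
     = x0 * growth_factor + (1 - residual_factor) / (4 * wT * residual_factor)"
proof -
  have E: "expectation (wealth s P optimal_strategy x0 T)
      = x0 * growth_factor + 1 / (2 * wT) * (1 - residual_factor) / residual_factor"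
    using expectation_wealth_optimal_strategy[OF order_refl]
    by (simp add: growth_factor_def residual_factor_def)
  show ?thesis
    unfolding variance_wealth_optimal_strategy unfolding E
    using residual_factor_pos wT_pos by (simp add: field_simps power2_eq_square)
qed

lemma mean_variance_le:
  assumes "1 \<le> T" and u: "admissible M P T u"
  shows "expectation (wealth s P u x0 T) - wT * variance (wealth s P u x0 T)
     \<le> x0 * growth_factor + (1 - residual_factor) / (4 * wT * residual_factor)"
proof -
  define X where "X = wealth s P u x0 T"
  have X: "X \<in> borel_measurable M" "integrable M (\<lambda>w. (X w)\<^sup>2)"
    using wealth_measurable_square_integrable[OF order_refl u] measurable_past_imp_measurable
    by (auto simp: X_def)
  then have "integrable M X" by (rule square_integrable_imp_integrable)
  have "residual_factor * (x0 * growth_factor - \<gamma>)\<^sup>2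
      \<le> expectation (\<lambda>w. (X w)\<^sup>2) - 2 * \<gamma> * expectation X + \<gamma>\<^sup>2" for \<gamma>
  proof -
    have "(\<Prod>k<T. (s k)\<^sup>2 * (1 - Bval M (P k))) * (x0 - target \<gamma> 0)\<^sup>2
        = growth_factor\<^sup>2 * residual_factor * (x0 - \<gamma> / growth_factor)\<^sup>2"
      unfolding prod.distrib prod_power_distrib[symmetric] target_0
        growth_factor_def[symmetric] residual_factor_def[symmetric] ..
    also have "\<dots> = residual_factor * (x0 * growth_factor - \<gamma>)\<^sup>2"
      using growth_factor_pos by (simp add: field_simps power2_eq_square)
    finally have "residual_factor * (x0 * growth_factor - \<gamma>)\<^sup>2 \<le> (\<integral>w. (X w - \<gamma>)\<^sup>2 \<partial>M)"
      using tracking_error_ge[OF order_refl u, of x0 \<gamma>] by (simp add: X_def target_T)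
    also have "\<dots> = expectation (\<lambda>w. (X w)\<^sup>2) - 2 * \<gamma> * expectation X + \<gamma>\<^sup>2"
      using \<open>integrable M X\<close> X(2) by (simp add: power2_diff prob_space)
    finally show ?thesis .
  qed
  then have "expectation X - wT * (expectation (\<lambda>w. (X w)\<^sup>2) - (expectation X)\<^sup>2)
      \<le> x0 * growth_factor + (1 - residual_factor) / (4 * wT * residual_factor)"
    using residual_factor_pos residual_factor_less_1[OF assms(1)] wT_pos
    by (intro mean_variance_le_of_tracking_bound) auto
  then show ?thesis
    unfolding X_def[symmetric] variance_eq[OF \<open>integrable M X\<close> X(2)] .
qed

end

theorem mainTheorem2:
  fixes M :: "'a measure" and P :: "nat \<Rightarrow> 'a \<Rightarrow> real^'n"
    and s :: "nat \<Rightarrow> real" and T :: nat and x0 :: real and wT :: real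
  assumes "prob_space M"
    and "T \<ge> 1"
    and "\<And>t. t < T \<Longrightarrow> s t > 1"
    and "\<And>t. t < T \<Longrightarrow> P t \<in> borel_measurable M"
    and "prob_space.indep_vars M (\<lambda>_. borel) P {..<T}"
    and "\<And>t. t < T \<Longrightarrow> integrable M (\<lambda>w. (norm (P t w))\<^sup>2)"
    and "\<And>t x. t < T \<Longrightarrow> x \<noteq> 0 \<Longrightarrow> x \<bullet> (mom2 M (P t) *v x) > 0"
    and "\<And>t. t < T \<Longrightarrow> 0 < Bval M (P t) \<and> Bval M (P t) < 1"
    and "wT > 0"
  defines "ustar \<equiv> \<lambda>t w. mv_feedback M P s T x0 wT t
              (fb_wealth s P (mv_feedback M P s T x0 wT) x0 t w)"
    and "J \<equiv> \<lambda>u. prob_space.expectation M (wealth s P u x0 T)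
              - wT * prob_space.variance M (wealth s P u x0 T)"
  shows "admissible M P T ustar
    \<and> (\<forall>u. admissible M P T u \<longrightarrow> J u \<le> J ustar)
    \<and> (\<forall>t\<le>T. prob_space.expectation M (wealth s P ustar x0 t)
          = x0 * (\<Prod>k<t. s k) + 1 / (2 * wT) * (\<Prod>k\<in>{t..<T}. inverse (s k))
              * (1 - (\<Prod>k<t. 1 - Bval M (P k))) / (\<Prod>k<T. 1 - Bval M (P k)))
    \<and> prob_space.variance M (wealth s P ustar x0 T)
          = (1 - (\<Prod>k<T. 1 - Bval M (P k))) / (4 * wT\<^sup>2 * (\<Prod>k<T. 1 - Bval M (P k)))"
proof -
  interpret mv_problem M P T s x0 wT
    unfolding mv_problem_def mv_market_def return_process_def
      mv_problem_axioms_def mv_market_axioms_def return_process_axioms_def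
    using assms(1-9) by blast
  have ustar: "ustar = optimal_strategy"
    by (simp add: fun_eq_iff ustar_def optimal_strategy_def)
  have "J u \<le> J ustar" if "admissible M P T u" for u
    using mean_variance_le[OF assms(2) that] mean_variance_optimal_strategy
    unfolding J_def ustar by linarith
  then show ?thesis
    using admissible_optimal_strategy[OF order_refl] expectation_wealth_optimal_strategy
      variance_wealth_optimal_strategy
    unfolding ustar residual_factor_def by blast
qed

end
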